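(* Let $G_2$ be the graph with vertices $v_1,\dots,v_6$ and edges $a_1=v_2v_6$, $a_2=v_2v_4$, $a_3=v_4v_6$, $a_4=v_1v_3$, $a_5=v_3v_5$, $a_6=v_1v_5$, $a_7=v_2v_5$, $a_8=v_1v_4$, $a_9=v_3v_6$. Then $$F^{G_2}(\mathbf{x},y)=\frac{1}{(1-yx_1x_5x_8)(1-yx_2x_6x_9)(1-yx_3x_4x_7)(1-yx_7x_8x_9)}+\frac{y^2x_1x_2x_3x_4x_5x_6}{(1-yx_1x_5x_8)(1-yx_2x_6x_9)(1-yx_3x_4x_7)(1-y^2x_1x_2x_3x_4x_5x_6)},$$ and consequently $F^{G_2}(y)=\frac{1+y+y^2}{(1-y)^3(1-y^2)}$.
   Context: For a finite graph $G$ with edges $a_1,\dots,a_n$, a magic labelling is an assignment of nonnegative integer labels $\alpha_i$ to the edges $a_i$ such that for every vertex $v$ the sum of the labels of the edges incident to $v$ equals the same number $s=s(\alpha)$ (the magic sum). A labelling is identified with $\alpha=(\alpha_1,\dots,\alpha_n)\in\mathbb{N}^n$, and $S(G)$ is the set of all magic labellings. Define the formal power series $F^G(\mathbf{x},y)=\sum_{\alpha\in S(G)}x_1^{\alpha_1}\cdots x_n^{\alpha_n}y^{s(\alpha)}$ and $F^G(y)=F^G(1,\dots,1,y)=\sum_{s\ge0}h_G(s)y^s$, where $h_G(s)$ is the number of magic labellings with magic sum $s$. *)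

theory Defs
  imports "HOL-Computational_Algebra.Formal_Power_Series"
begin

text \<open>A finite graph with vertex set V and edges a_1..a_n; the edge a_i has
  endpoint set ends i. A labelling is a function alpha :: nat => nat vanishing
  outside {1..n} (alpha i is the label of edge a_i).\<close>

definition magic_labelling ::
  "nat set \<Rightarrow> nat \<Rightarrow> (nat \<Rightarrow> nat set) \<Rightarrow> (nat \<Rightarrow> nat) \<Rightarrow> nat \<Rightarrow> bool" where
  "magic_labelling V n ends \<alpha> s \<longleftrightarrow>
     (\<forall>i. i \<notin> {1..n} \<longrightarrow> \<alpha> i = 0) \<and>
     (\<forall>v\<in>V. (\<Sum>i\<in>{i\<in>{1..n}. v \<in> ends i}. \<alpha> i) = s)"

definition hG :: "nat set \<Rightarrow> nat \<Rightarrow> (nat \<Rightarrow> nat set) \<Rightarrow> nat \<Rightarrow> nat" where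
  "hG V n ends s = card {\<alpha>. magic_labelling V n ends \<alpha> s}"

definition FG_y :: "nat set \<Rightarrow> nat \<Rightarrow> (nat \<Rightarrow> nat set) \<Rightarrow> rat fps" where
  "FG_y V n ends = Abs_fps (\<lambda>s. of_nat (hG V n ends s))"

text \<open>Formal power series in the 10 variables y, x_1, ..., x_9, realised as nested
  univariate formal power series: outermost variable y, then x_1, ..., innermost x_9.\<close>
type_synonym mps10 = "rat fps fps fps fps fps fps fps fps fps fps"

definition lab9 :: "nat list \<Rightarrow> nat \<Rightarrow> nat" where
  "lab9 as i = (if 1 \<le> i \<and> i \<le> 9 then as ! (i - 1) else 0)"

definition FG9 :: "nat set \<Rightarrow> (nat \<Rightarrow> nat set) \<Rightarrow> mps10" where
  "FG9 V ends = Abs_fps (\<lambda>s. Abs_fps (\<lambda>a1. Abs_fps (\<lambda>a2. Abs_fps (\<lambda>a3.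
     Abs_fps (\<lambda>a4. Abs_fps (\<lambda>a5. Abs_fps (\<lambda>a6. Abs_fps (\<lambda>a7.
     Abs_fps (\<lambda>a8. Abs_fps (\<lambda>a9.
       if magic_labelling V 9 ends (lab9 [a1,a2,a3,a4,a5,a6,a7,a8,a9]) s then 1 else 0))))))))))"

definition Yv :: mps10 where "Yv = fps_X"
definition X1 :: mps10 where "X1 = fps_const fps_X"
definition X2 :: mps10 where "X2 = fps_const (fps_const fps_X)"
definition X3 :: mps10 where "X3 = fps_const (fps_const (fps_const fps_X))"
definition X4 :: mps10 where "X4 = fps_const (fps_const (fps_const (fps_const fps_X)))"
definition X5 :: mps10 where
  "X5 = fps_const (fps_const (fps_const (fps_const (fps_const fps_X))))"
definition X6 :: mps10 where
  "X6 = fps_const (fps_const (fps_const (fps_const (fps_const (fps_const fps_X)))))"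
definition X7 :: mps10 where
  "X7 = fps_const (fps_const (fps_const (fps_const (fps_const (fps_const (fps_const fps_X))))))"
definition X8 :: mps10 where
  "X8 = fps_const (fps_const (fps_const (fps_const (fps_const (fps_const (fps_const
          (fps_const fps_X)))))))"
definition X9 :: mps10 where
  "X9 = fps_const (fps_const (fps_const (fps_const (fps_const (fps_const (fps_const
          (fps_const (fps_const fps_X))))))))"

definition G2_V :: "nat set" where "G2_V = {1..6}"

definition G2_ends :: "nat \<Rightarrow> nat set" where
  "G2_ends i = (if i = 1 then {2,6} else if i = 2 then {2,4} else if i = 3 then {4,6}
     else if i = 4 then {1,3} else if i = 5 then {3,5} else if i = 6 then {1,5}
     else if i = 7 then {2,5} else if i = 8 then {1,4} else if i = 9 then {3,6} else {})"

end

theory Submission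
  imports Defs
begin

(* Every magic labelling of G_2 satisfies a_1 = a_5, a_2 = a_6, a_3 = a_4 and
   a_7 - a_3 = a_8 - a_1 = a_9 - a_2.  Let M_1 = {a_1,a_5,a_8}, M_2 = {a_2,a_6,a_9},
   M_3 = {a_3,a_4,a_7}, M_4 = {a_7,a_8,a_9} be four perfect matchings and H = {a_1,...,a_6}
   the 2-factor formed by the two triangles.  If a_3 <= a_7 the labelling is uniquely
   k_1 M_1 + k_2 M_2 + k_3 M_3 + d M_4 (lab_le), otherwise it is uniquely
   k_1 M_1 + k_2 M_2 + k_3 M_3 + (m + 1) H (lab_gt).  So F^G is the sum of two products of
   geometric series, one per family, and h_G(s) counts the parameters of both families. *)

unbundle fps_syntax

section \<open>Generating series of weighted sets\<close>

(* fps_gen deg w is the sum of w p * X^(deg p); an infinite fibre of deg contributes 0. *)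
definition fps_gen :: "('p \<Rightarrow> nat) \<Rightarrow> ('p \<Rightarrow> 'a::comm_monoid_add) \<Rightarrow> 'a fps" where
  "fps_gen deg w = Abs_fps (\<lambda>n. \<Sum>p | deg p = n. w p)"

lemma fps_gen_nth [simp]: "fps_gen deg w $ n = (\<Sum>p | deg p = n. w p)"
  by (simp add: fps_gen_def)

lemma fps_gen_cong:
  "(\<And>p. deg p = deg' p) \<Longrightarrow> (\<And>p. w p = w' p) \<Longrightarrow> fps_gen deg w = fps_gen deg' w'"
  by (simp add: fps_gen_def)

lemma fibre_plus_eq:
  fixes d :: "'p \<Rightarrow> nat" and e :: "'q \<Rightarrow> nat"
  shows "{pq. (case pq of (p, q) \<Rightarrow> d p + e q) = n} = (\<Union>i\<in>{..n}. {p. d p = i} \<times> {q. e q = n - i})"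
  by auto

lemma finite_fibres_plus:
  fixes d :: "'p \<Rightarrow> nat" and e :: "'q \<Rightarrow> nat"
  assumes "\<And>i. finite {p. d p = i}" and "\<And>i. finite {q. e q = i}"
  shows "finite {pq. (case pq of (p, q) \<Rightarrow> d p + e q) = n}"
  unfolding fibre_plus_eq using assms by blast

lemma fps_gen_mult:
  fixes w :: "'p \<Rightarrow> 'a::comm_semiring_1" and u :: "'q \<Rightarrow> 'a"
  assumes fin_d: "\<And>i. finite {p. d p = i}" and fin_e: "\<And>i. finite {q. e q = i}"
  shows "fps_gen d w * fps_gen e u = fps_gen (\<lambda>(p, q). d p + e q) (\<lambda>(p, q). w p * u q)"
proof (rule fps_ext)
  fix n
  have "(fps_gen d w * fps_gen e u) $ n
      = (\<Sum>i\<le>n. \<Sum>(p, q) \<in> {p. d p = i} \<times> {q. e q = n - i}. w p * u q)"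
    by (simp add: fps_mult_nth atLeast0AtMost sum_product sum.cartesian_product)
  also have "\<dots> = (\<Sum>(p, q) \<in> (\<Union>i\<in>{..n}. {p. d p = i} \<times> {q. e q = n - i}). w p * u q)"
    by (rule sum.UNION_disjoint[symmetric]) (auto simp: fin_d fin_e)
  finally show "(fps_gen d w * fps_gen e u) $ n
      = fps_gen (\<lambda>(p, q). d p + e q) (\<lambda>(p, q). w p * u q) $ n"
    by (simp only: fps_gen_nth fibre_plus_eq [symmetric])
qed

lemma fps_gen_shift:
  fixes w :: "'p \<Rightarrow> 'a::comm_semiring_1"
  shows "fps_X ^ j * fps_const c * fps_gen d w = fps_gen (\<lambda>p. d p + j) (\<lambda>p. c * w p)"
proof (rule fps_ext)
  fix n
  have "{p. d p + j = n} = (if n < j then {} else {p. d p = n - j})"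
    by auto
  then show "(fps_X ^ j * fps_const c * fps_gen d w) $ n = fps_gen (\<lambda>p. d p + j) (\<lambda>p. c * w p) $ n"
    by (simp add: mult.assoc fps_X_power_mult_nth sum_distrib_left)
qed

lemma geometric_series_fps_gen:
  fixes c :: "'a::comm_ring_1"
  assumes "e > 0"
  shows "(1 - fps_X ^ e * fps_const c) * fps_gen (\<lambda>k. e * k) (\<lambda>k. c ^ k) = 1"
proof (rule fps_ext)
  fix n
  define G where "G = fps_gen (\<lambda>k. e * k) (\<lambda>k. c ^ k)"
  have "{k. e * k = m} = (if e dvd m then {m div e} else {})" for m
    using assms by auto
  then have coeff: "G $ m = (if e dvd m then c ^ (m div e) else 0)" for m
    by (simp add: G_def)
  show "((1 - fps_X ^ e * fps_const c) * G) $ n = 1 $ n"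
  proof (cases "e \<le> n")
    case True
    then have "e dvd n \<longleftrightarrow> e dvd n - e" "n div e = Suc ((n - e) div e)"
      using assms by (auto simp: dvd_minus_self div_if)
    with True assms show ?thesis
      by (simp add: left_diff_distrib mult.assoc fps_X_power_mult_nth coeff)
  next
    case False
    then show ?thesis
      using assms by (auto simp: left_diff_distrib mult.assoc fps_X_power_mult_nth coeff dest: dvd_imp_le)
  qed
qed

lemma finite_fibres_mult:
  fixes e :: nat
  assumes "e > 0"
  shows "finite {k. e * k = i}"
  by (rule finite_subset [of _ "{..i}"]) (use assms in auto)

lemma geometric_product4_fps_gen:
  fixes c1 c2 c3 c4 :: "'a::comm_ring_1"
  assumes "e1 > 0" "e2 > 0" "e3 > 0" "e4 > 0"
  shows "(1 - fps_X ^ e1 * fps_const c1) * (1 - fps_X ^ e2 * fps_const c2)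
           * (1 - fps_X ^ e3 * fps_const c3) * (1 - fps_X ^ e4 * fps_const c4)
         * fps_gen (\<lambda>(k1, k2, k3, k4). e1 * k1 + e2 * k2 + e3 * k3 + e4 * k4)
                   (\<lambda>(k1, k2, k3, k4). c1 ^ k1 * c2 ^ k2 * c3 ^ k3 * c4 ^ k4) = 1"
    (is "?L1 * ?L2 * ?L3 * ?L4 * ?F = 1")
proof -
  define G where "G e c = fps_gen (\<lambda>k. e * k) (\<lambda>k::nat. c ^ k :: 'a)" for e c
  have fin: "finite {k. e * k = i}" if "e \<in> {e1, e2, e3, e4}" for e i
    using that assms by (auto intro: finite_fibres_mult)
  have "G e1 c1 * (G e2 c2 * (G e3 c3 * G e4 c4))
      = fps_gen (\<lambda>(k1, k2, k3, k4). e1 * k1 + (e2 * k2 + (e3 * k3 + e4 * k4)))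
                (\<lambda>(k1, k2, k3, k4). c1 ^ k1 * (c2 ^ k2 * (c3 ^ k3 * c4 ^ k4)))"
    unfolding G_def
    by (subst fps_gen_mult, simp add: fin, simp add: fin finite_fibres_plus)+ (simp add: split_def)
  also have "\<dots> = ?F"
    by (rule fps_gen_cong) (auto simp: add.assoc mult.assoc)
  finally have F: "G e1 c1 * (G e2 c2 * (G e3 c3 * G e4 c4)) = ?F" .
  have "?L1 * ?L2 * ?L3 * ?L4 * ?F
      = (?L1 * G e1 c1) * (?L2 * G e2 c2) * (?L3 * G e3 c3) * (?L4 * G e4 c4)"
    unfolding F [symmetric] by (simp only: mult_ac)
  also have "\<dots> = 1"
    using assms by (simp add: G_def geometric_series_fps_gen)
  finally show ?thesis .
qed

lemma fps_mult_inverse_eq_1: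
  fixes f :: "'a::{ring_1,inverse} fps"
  assumes "inverse (1::'a) = 1" and "f $ 0 = 1"
  shows "f * inverse f = 1"
  using fps_right_inverse [of f 1] assms by (simp add: fps_inverse_def)

lemma fps_inverse_eqI:
  fixes f g :: "'a::{comm_ring_1,inverse} fps"
  assumes "inverse (1::'a) = 1" and "f $ 0 = 1" and "f * g = 1"
  shows "inverse f = g"
proof -
  have "inverse f = inverse f * (f * g)"
    using assms(3) by simp
  also have "\<dots> = (f * inverse f) * g"
    by (simp only: mult_ac)
  finally show ?thesis
    using fps_mult_inverse_eq_1 [OF assms(1,2)] by simp
qed

section \<open>Power series in nine variables\<close>

type_synonym mps9 = "rat fps fps fps fps fps fps fps fps fps"

definition x1 :: mps9 where "x1 = fps_X"
definition x2 :: mps9 where "x2 = fps_const fps_X"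
definition x3 :: mps9 where "x3 = fps_const (fps_const fps_X)"
definition x4 :: mps9 where "x4 = fps_const (fps_const (fps_const fps_X))"
definition x5 :: mps9 where "x5 = fps_const (fps_const (fps_const (fps_const fps_X)))"
definition x6 :: mps9 where
  "x6 = fps_const (fps_const (fps_const (fps_const (fps_const fps_X))))"
definition x7 :: mps9 where
  "x7 = fps_const (fps_const (fps_const (fps_const (fps_const (fps_const fps_X)))))"
definition x8 :: mps9 where
  "x8 = fps_const (fps_const (fps_const (fps_const (fps_const (fps_const (fps_const fps_X))))))"
definition x9 :: mps9 where
  "x9 = fps_const (fps_const (fps_const (fps_const (fps_const (fps_const (fps_const
          (fps_const fps_X)))))))"

lemma X_eq_fps_const:
  "X1 = fps_const x1" "X2 = fps_const x2" "X3 = fps_const x3" "X4 = fps_const x4"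
  "X5 = fps_const x5" "X6 = fps_const x6" "X7 = fps_const x7" "X8 = fps_const x8"
  "X9 = fps_const x9"
  by (simp_all add: X1_def X2_def X3_def X4_def X5_def X6_def X7_def X8_def X9_def
      x1_def x2_def x3_def x4_def x5_def x6_def x7_def x8_def x9_def)

lemma inverse_1_mps9: "inverse (1::mps9) = 1"
  by (simp add: fps_inverse_one')

definition mps9_of :: "(nat list \<Rightarrow> rat) \<Rightarrow> mps9" where
  "mps9_of f = Abs_fps (\<lambda>a1. Abs_fps (\<lambda>a2. Abs_fps (\<lambda>a3.
     Abs_fps (\<lambda>a4. Abs_fps (\<lambda>a5. Abs_fps (\<lambda>a6. Abs_fps (\<lambda>a7.
     Abs_fps (\<lambda>a8. Abs_fps (\<lambda>a9. f [a1, a2, a3, a4, a5, a6, a7, a8, a9])))))))))"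

lemma mps9_of_cong:
  "(\<And>a1 a2 a3 a4 a5 a6 a7 a8 a9.
      f [a1, a2, a3, a4, a5, a6, a7, a8, a9] = g [a1, a2, a3, a4, a5, a6, a7, a8, a9])
   \<Longrightarrow> mps9_of f = mps9_of g"
  by (simp add: mps9_of_def)

lemma sum_Abs_fps: "(\<Sum>i\<in>A. Abs_fps (f i)) = Abs_fps (\<lambda>n. \<Sum>i\<in>A. f i n)"
  by (rule fps_ext) (simp add: fps_sum_nth)

lemma sum_mps9_of: "(\<Sum>i\<in>A. mps9_of (f i)) = mps9_of (\<lambda>a. \<Sum>i\<in>A. f i a)"
  unfolding mps9_of_def by (simp only: sum_Abs_fps)

definition monomial9 :: "nat list \<Rightarrow> mps9" where
  "monomial9 v = x1 ^ (v ! 0) * x2 ^ (v ! 1) * x3 ^ (v ! 2) * x4 ^ (v ! 3) * x5 ^ (v ! 4)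
     * x6 ^ (v ! 5) * x7 ^ (v ! 6) * x8 ^ (v ! 7) * x9 ^ (v ! 8)"

lemma list_length_9E:
  assumes "length v = 9"
  obtains a1 a2 a3 a4 a5 a6 a7 a8 a9 where "v = [a1, a2, a3, a4, a5, a6, a7, a8, a9]"
proof -
  have "v = [v!0, v!1, v!2, v!3, v!4, v!5, v!6, v!7, v!8]"
    using assms by (simp add: list_eq_iff_nth_eq less_Suc_eq nth_Cons' numeral_eq_Suc)
  then show ?thesis using that by blast
qed

lemma fps_X_power_mult_const: "fps_X ^ n * fps_const c = Abs_fps (\<lambda>k. if k = n then c else 0)"
  by (rule fps_ext) (simp add: fps_X_power_iff)

lemma if_Abs_fps_0: "(if P then Abs_fps f else 0) = Abs_fps (\<lambda>n. if P then f n else 0)"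
  by (rule fps_ext) simp

lemma monomial9_eq_mps9_of:
  assumes "length v = 9"
  shows "monomial9 v = mps9_of (\<lambda>a. if a = v then 1 else 0)"
proof -
  obtain b1 b2 b3 b4 b5 b6 b7 b8 b9 where v: "v = [b1, b2, b3, b4, b5, b6, b7, b8, b9]"
    using assms by (rule list_length_9E)
  have "monomial9 v = fps_X^b1 * fps_const (fps_X^b2 * fps_const (fps_X^b3 *
     fps_const (fps_X^b4 * fps_const (fps_X^b5 * fps_const (fps_X^b6 * fps_const (fps_X^b7 *
     fps_const (fps_X^b8 * fps_const (fps_X^b9 * fps_const 1))))))))"
    by (simp add: v monomial9_def x1_def x2_def x3_def x4_def x5_def x6_def x7_def x8_def x9_def
        mult.assoc)
  also have "\<dots> = mps9_of (\<lambda>a. if a = v then 1 else 0)"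
    unfolding fps_X_power_mult_const mps9_of_def v
    by (simp only: if_Abs_fps_0 if_if_eq_conj list.inject conj_assoc simp_thms)
  finally show ?thesis .
qed

section \<open>Magic labellings of graphs with nine edges\<close>

definition magic_vectors :: "nat set \<Rightarrow> (nat \<Rightarrow> nat set) \<Rightarrow> nat \<Rightarrow> nat list set" where
  "magic_vectors V ends s = {v. length v = 9 \<and> magic_labelling V 9 ends (lab9 v) s}"

lemma inj_on_lab9: "inj_on lab9 {v. length v = 9}"
proof (rule inj_onI)
  fix v w assume "v \<in> {v. length v = 9}" "w \<in> {v. length v = 9}" and eq: "lab9 v = lab9 w"
  moreover have "v ! i = w ! i" if "i < 9" for i
    using fun_cong [OF eq, of "Suc i"] that by (simp add: lab9_def)
  ultimately show "v = w"
    by (simp add: list_eq_iff_nth_eq)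
qed

lemma magic_labellings_eq_image_lab9:
  "{\<alpha>. magic_labelling V 9 ends \<alpha> s} = lab9 ` magic_vectors V ends s"
proof (intro equalityI subsetI)
  fix \<alpha> assume "\<alpha> \<in> {\<alpha>. magic_labelling V 9 ends \<alpha> s}"
  then have magic: "magic_labelling V 9 ends \<alpha> s" by simp
  have "lab9 (map \<alpha> [1..<10]) i = \<alpha> i" for i
    using magic by (auto simp: lab9_def magic_labelling_def)
  then have "lab9 (map \<alpha> [1..<10]) = \<alpha>" ..
  moreover from this magic have "map \<alpha> [1..<10] \<in> magic_vectors V ends s"
    by (simp add: magic_vectors_def)
  ultimately show "\<alpha> \<in> lab9 ` magic_vectors V ends s"
    by (metis image_eqI)
qed (auto simp: magic_vectors_def)

lemma hG_eq_card_magic_vectors: "hG V 9 ends s = card (magic_vectors V ends s)"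
  unfolding hG_def magic_labellings_eq_image_lab9
  by (rule card_image, rule inj_on_subset [OF inj_on_lab9]) (auto simp: magic_vectors_def)

lemma FG9_nth:
  assumes "finite (magic_vectors V ends s)"
  shows "FG9 V ends $ s = (\<Sum>v\<in>magic_vectors V ends s. monomial9 v)"
proof -
  have "FG9 V ends $ s = mps9_of (\<lambda>a. if magic_labelling V 9 ends (lab9 a) s then 1 else 0)"
    by (simp add: FG9_def mps9_of_def)
  also have "\<dots> = mps9_of (\<lambda>a. \<Sum>v\<in>magic_vectors V ends s. if a = v then 1 else 0)"
    by (rule mps9_of_cong) (simp add: sum.delta' [OF assms], simp add: magic_vectors_def)
  also have "\<dots> = (\<Sum>v\<in>magic_vectors V ends s. monomial9 v)"
    by (simp add: sum_mps9_of monomial9_eq_mps9_of magic_vectors_def)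
  finally show ?thesis .
qed

section \<open>The graph G_2\<close>

lemma magic_G2_iff:
  "magic_labelling G2_V 9 G2_ends (lab9 [a1, a2, a3, a4, a5, a6, a7, a8, a9]) s \<longleftrightarrow>
     a4 + a6 + a8 = s \<and> a1 + a2 + a7 = s \<and> a4 + a5 + a9 = s \<and>
     a2 + a3 + a8 = s \<and> a5 + a6 + a7 = s \<and> a1 + a3 + a9 = s"
proof -
  have V: "G2_V = {1, 2, 3, 4, 5, 6}"
    by (auto simp: G2_V_def)
  have ends:
    "{i \<in> {1..9}. 1 \<in> G2_ends i} = {4, 6, 8}" "{i \<in> {1..9}. 2 \<in> G2_ends i} = {1, 2, 7}"
    "{i \<in> {1..9}. 3 \<in> G2_ends i} = {4, 5, 9}" "{i \<in> {1..9}. 4 \<in> G2_ends i} = {2, 3, 8}"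
    "{i \<in> {1..9}. 5 \<in> G2_ends i} = {5, 6, 7}" "{i \<in> {1..9}. 6 \<in> G2_ends i} = {1, 3, 9}"
    by (auto simp: G2_ends_def split: if_splits)
  show ?thesis
    by (simp only: magic_labelling_def V ball_simps ends) (simp add: lab9_def add.assoc)
qed

definition lab_le :: "nat \<times> nat \<times> nat \<times> nat \<Rightarrow> nat list" where
  "lab_le = (\<lambda>(k1, k2, k3, d). [k1, k2, k3, k3, k1, k2, k3 + d, k1 + d, k2 + d])"

definition lab_gt :: "nat \<times> nat \<times> nat \<times> nat \<Rightarrow> nat list" where
  "lab_gt = (\<lambda>(k1, k2, k3, m). [k1 + m + 1, k2 + m + 1, k3 + m + 1, k3 + m + 1, k1 + m + 1, k2 + m + 1,
                                k3, k1, k2])"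

definition deg_le :: "nat \<times> nat \<times> nat \<times> nat \<Rightarrow> nat" where
  "deg_le = (\<lambda>(k1, k2, k3, d). k1 + k2 + k3 + d)"

definition deg_gt :: "nat \<times> nat \<times> nat \<times> nat \<Rightarrow> nat" where
  "deg_gt = (\<lambda>(k1, k2, k3, m). k1 + k2 + k3 + 2 * m + 2)"

lemma magic_vectors_G2:
  "magic_vectors G2_V G2_ends s = lab_le ` {k. deg_le k = s} \<union> lab_gt ` {k. deg_gt k = s}"
proof (intro equalityI subsetI)
  fix v assume "v \<in> magic_vectors G2_V G2_ends s"
  then have "length v = 9" and magic: "magic_labelling G2_V 9 G2_ends (lab9 v) s"
    by (auto simp: magic_vectors_def)
  then obtain a1 a2 a3 a4 a5 a6 a7 a8 a9 where v: "v = [a1, a2, a3, a4, a5, a6, a7, a8, a9]"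
    by (elim list_length_9E)
  have eqs: "a4 + a6 + a8 = s" "a1 + a2 + a7 = s" "a4 + a5 + a9 = s"
    "a2 + a3 + a8 = s" "a5 + a6 + a7 = s" "a1 + a3 + a9 = s"
    using magic unfolding v magic_G2_iff by auto
  show "v \<in> lab_le ` {k. deg_le k = s} \<union> lab_gt ` {k. deg_gt k = s}"
  proof (cases "a3 \<le> a7")
    case True
    with eqs have "v = lab_le (a1, a2, a3, a7 - a3)" "deg_le (a1, a2, a3, a7 - a3) = s"
      by (auto simp: v lab_le_def deg_le_def)
    then show ?thesis by blast
  next
    case False
    with eqs have "v = lab_gt (a8, a9, a7, a3 - a7 - 1)" "deg_gt (a8, a9, a7, a3 - a7 - 1) = s"
      by (auto simp: v lab_gt_def deg_gt_def)
    then show ?thesis by blast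
  qed
next
  fix v assume "v \<in> lab_le ` {k. deg_le k = s} \<union> lab_gt ` {k. deg_gt k = s}"
  then show "v \<in> magic_vectors G2_V G2_ends s"
    by (auto simp: magic_vectors_def lab_le_def lab_gt_def deg_le_def deg_gt_def magic_G2_iff)
qed

lemma finite_fibres_deg_le: "finite {k. deg_le k = s}"
  by (rule finite_subset [of _ "{..s} \<times> {..s} \<times> {..s} \<times> {..s}"]) (auto simp: deg_le_def)

lemma finite_fibres_deg_gt: "finite {k. deg_gt k = s}"
  by (rule finite_subset [of _ "{..s} \<times> {..s} \<times> {..s} \<times> {..s}"]) (auto simp: deg_gt_def)

lemma sum_magic_vectors_G2:
  "(\<Sum>v\<in>magic_vectors G2_V G2_ends s. f v)
     = (\<Sum>k | deg_le k = s. f (lab_le k)) + (\<Sum>k | deg_gt k = s. f (lab_gt k))"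
proof -
  have "inj lab_le" "inj lab_gt"
    by (auto simp: inj_def lab_le_def lab_gt_def)
  moreover have "lab_le ` A \<inter> lab_gt ` B = {}" for A B
    by (auto simp: lab_le_def lab_gt_def)
  ultimately show ?thesis
    unfolding magic_vectors_G2
    by (subst sum.union_disjoint) (auto simp: finite_fibres_deg_le finite_fibres_deg_gt sum.reindex
        inj_on_subset)
qed

lemma finite_magic_vectors_G2: "finite (magic_vectors G2_V G2_ends s)"
  by (simp add: magic_vectors_G2 finite_fibres_deg_le finite_fibres_deg_gt)

lemma FG9_G2:
  "FG9 G2_V G2_ends =
     fps_gen deg_le (\<lambda>(k1, k2, k3, d).
       (x1 * x5 * x8) ^ k1 * (x2 * x6 * x9) ^ k2 * (x3 * x4 * x7) ^ k3 * (x7 * x8 * x9) ^ d)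
   + fps_gen deg_gt (\<lambda>(k1, k2, k3, m).
       (x1 * x5 * x8) ^ k1 * (x2 * x6 * x9) ^ k2 * (x3 * x4 * x7) ^ k3
       * (x1 * x2 * x3 * x4 * x5 * x6) ^ (m + 1))"
  (is "_ = ?rhs")
proof -
  have "FG9 G2_V G2_ends
      = fps_gen deg_le (\<lambda>k. monomial9 (lab_le k)) + fps_gen deg_gt (\<lambda>k. monomial9 (lab_gt k))"
    by (rule fps_ext) (simp add: FG9_nth finite_magic_vectors_G2 sum_magic_vectors_G2)
  also have "\<dots> = ?rhs"
    by (intro arg_cong2 [where f = "(+)"] fps_gen_cong)
      (auto simp: monomial9_def lab_le_def lab_gt_def power_add power_mult_distrib mult_ac)
  finally show ?thesis .
qed

lemma FG_y_G2: "FG_y G2_V 9 G2_ends = fps_gen deg_le (\<lambda>_. 1) + fps_gen deg_gt (\<lambda>_. 1)"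
proof (rule fps_ext)
  fix s
  have "hG G2_V 9 G2_ends s = (\<Sum>v\<in>magic_vectors G2_V G2_ends s. 1)"
    by (simp add: hG_eq_card_magic_vectors)
  then show "FG_y G2_V 9 G2_ends $ s = (fps_gen deg_le (\<lambda>_. 1) + fps_gen deg_gt (\<lambda>_. 1)) $ s"
    by (simp only: FG_y_def fps_nth_Abs_fps fps_add_nth fps_gen_nth sum_magic_vectors_G2 of_nat_add
        of_nat_sum of_nat_1)
qed

lemma mult_fps_gen_deg_le:
  fixes c1 c2 c3 c4 :: "'a::comm_ring_1"
  shows "(1 - fps_X * fps_const c1) * (1 - fps_X * fps_const c2) * (1 - fps_X * fps_const c3)
           * (1 - fps_X * fps_const c4)
         * fps_gen deg_le (\<lambda>(k1, k2, k3, d). c1 ^ k1 * c2 ^ k2 * c3 ^ k3 * c4 ^ d) = 1"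
  using geometric_product4_fps_gen [of 1 1 1 1 c1 c2 c3 c4]
  by (simp add: deg_le_def)

lemma mult_fps_gen_deg_gt:
  fixes c1 c2 c3 t :: "'a::comm_ring_1"
  shows "(1 - fps_X * fps_const c1) * (1 - fps_X * fps_const c2) * (1 - fps_X * fps_const c3)
           * (1 - fps_X ^ 2 * fps_const t)
         * fps_gen deg_gt (\<lambda>(k1, k2, k3, m). c1 ^ k1 * c2 ^ k2 * c3 ^ k3 * t ^ (m + 1))
       = fps_X ^ 2 * fps_const t"
proof -
  have "fps_gen deg_gt (\<lambda>(k1, k2, k3, m). c1 ^ k1 * c2 ^ k2 * c3 ^ k3 * t ^ (m + 1))
      = fps_X ^ 2 * fps_const t * fps_gen (\<lambda>(k1, k2, k3, m). 1 * k1 + 1 * k2 + 1 * k3 + 2 * m)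
          (\<lambda>(k1, k2, k3, m). c1 ^ k1 * c2 ^ k2 * c3 ^ k3 * t ^ m)"
    unfolding fps_gen_shift by (rule fps_gen_cong) (auto simp: deg_gt_def mult_ac)
  then show ?thesis
    using geometric_product4_fps_gen [of 1 1 1 2 c1 c2 c3 t]
    by (simp add: mult_ac)
qed

lemma inverse_eq_fps_gen_deg_le:
  fixes c1 c2 c3 c4 :: "'a::{comm_ring_1,inverse}"
  assumes "inverse (1::'a) = 1"
  shows "inverse ((1 - fps_X * fps_const c1) * (1 - fps_X * fps_const c2)
                  * (1 - fps_X * fps_const c3) * (1 - fps_X * fps_const c4))
       = fps_gen deg_le (\<lambda>(k1, k2, k3, d). c1 ^ k1 * c2 ^ k2 * c3 ^ k3 * c4 ^ d)"
  using assms by (intro fps_inverse_eqI mult_fps_gen_deg_le) simp_all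

lemma mult_inverse_eq_fps_gen_deg_gt:
  fixes c1 c2 c3 t :: "'a::{comm_ring_1,inverse}"
  assumes "inverse (1::'a) = 1"
  shows "fps_X ^ 2 * fps_const t * inverse ((1 - fps_X * fps_const c1) * (1 - fps_X * fps_const c2)
                  * (1 - fps_X * fps_const c3) * (1 - fps_X ^ 2 * fps_const t))
       = fps_gen deg_gt (\<lambda>(k1, k2, k3, m). c1 ^ k1 * c2 ^ k2 * c3 ^ k3 * t ^ (m + 1))"
    (is "_ * inverse ?D = ?G")
proof -
  have "(?D * ?G) * inverse ?D = (?D * inverse ?D) * ?G"
    by (simp only: mult_ac)
  also have "\<dots> = ?G"
    using assms by (simp add: fps_mult_inverse_eq_1)
  finally show ?thesis
    unfolding mult_fps_gen_deg_gt .
qed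

lemma FG_y_G2_rational:
  "FG_y G2_V 9 G2_ends = (1 + fps_X + fps_X ^ 2) / ((1 - fps_X) ^ 3 * (1 - fps_X ^ 2))"
proof -
  define A where "A = fps_gen deg_le (\<lambda>_. 1::rat)"
  define B where "B = fps_gen deg_gt (\<lambda>_. 1::rat)"
  have "A = fps_gen deg_le (\<lambda>(k1, k2, k3, d). 1 ^ k1 * 1 ^ k2 * 1 ^ k3 * 1 ^ d)"
    unfolding A_def by (rule fps_gen_cong) auto
  then have A: "(1 - fps_X) * (1 - fps_X) * (1 - fps_X) * (1 - fps_X) * A = 1"
    using mult_fps_gen_deg_le [of "1::rat" 1 1 1] by simp
  have "B = fps_gen deg_gt (\<lambda>(k1, k2, k3, m). 1 ^ k1 * 1 ^ k2 * 1 ^ k3 * 1 ^ (m + 1))"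
    unfolding B_def by (rule fps_gen_cong) auto
  then have B: "(1 - fps_X) * (1 - fps_X) * (1 - fps_X) * (1 - fps_X ^ 2) * B = fps_X ^ 2"
    using mult_fps_gen_deg_gt [of "1::rat" 1 1 1] by simp
  have "(A + B) * ((1 - fps_X) ^ 3 * (1 - fps_X ^ 2))
      = (1 - fps_X) * (1 - fps_X) * (1 - fps_X) * (1 - fps_X) * A * (1 + fps_X)
        + (1 - fps_X) * (1 - fps_X) * (1 - fps_X) * (1 - fps_X ^ 2) * B"
    by algebra
  also have "\<dots> = 1 + fps_X + fps_X ^ 2"
    by (simp only: A B) simp
  finally have numerator: "(A + B) * ((1 - fps_X) ^ 3 * (1 - fps_X ^ 2)) = 1 + fps_X + fps_X ^ 2" .
  have "((1 - fps_X) ^ 3 * (1 - fps_X ^ 2)) $ 0 = (1::rat)"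
    by (simp add: fps_nth_power_0 power2_eq_square)
  then have "(1 - fps_X) ^ 3 * (1 - fps_X ^ 2) \<noteq> (0 :: rat fps)"
    by (metis fps_zero_nth zero_neq_one)
  then show ?thesis
    by (simp add: FG_y_G2 A_def [symmetric] B_def [symmetric] numerator [symmetric])
qed

theorem mainTheorem4:
  shows "FG9 G2_V G2_ends =
           inverse ((1 - Yv*X1*X5*X8) * (1 - Yv*X2*X6*X9) * (1 - Yv*X3*X4*X7) * (1 - Yv*X7*X8*X9))
         + Yv^2*X1*X2*X3*X4*X5*X6 *
           inverse ((1 - Yv*X1*X5*X8) * (1 - Yv*X2*X6*X9) * (1 - Yv*X3*X4*X7)
                    * (1 - Yv^2*X1*X2*X3*X4*X5*X6))
       \<and> FG_y G2_V 9 G2_ends = (1 + fps_X + fps_X^2) / ((1 - fps_X)^3 * (1 - fps_X^2))"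
proof
  have variables:
    "Yv * X1 * X5 * X8 = fps_X * fps_const (x1 * x5 * x8)"
    "Yv * X2 * X6 * X9 = fps_X * fps_const (x2 * x6 * x9)"
    "Yv * X3 * X4 * X7 = fps_X * fps_const (x3 * x4 * x7)"
    "Yv * X7 * X8 * X9 = fps_X * fps_const (x7 * x8 * x9)"
    "Yv ^ 2 * X1 * X2 * X3 * X4 * X5 * X6 = fps_X ^ 2 * fps_const (x1 * x2 * x3 * x4 * x5 * x6)"
    by (simp_all add: Yv_def X_eq_fps_const mult.assoc)
  show "FG9 G2_V G2_ends =
           inverse ((1 - Yv*X1*X5*X8) * (1 - Yv*X2*X6*X9) * (1 - Yv*X3*X4*X7) * (1 - Yv*X7*X8*X9))
         + Yv^2*X1*X2*X3*X4*X5*X6 *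
           inverse ((1 - Yv*X1*X5*X8) * (1 - Yv*X2*X6*X9) * (1 - Yv*X3*X4*X7)
                    * (1 - Yv^2*X1*X2*X3*X4*X5*X6))"
    unfolding variables inverse_eq_fps_gen_deg_le [OF inverse_1_mps9]
      mult_inverse_eq_fps_gen_deg_gt [OF inverse_1_mps9]
    by (rule FG9_G2)
  show "FG_y G2_V 9 G2_ends = (1 + fps_X + fps_X^2) / ((1 - fps_X)^3 * (1 - fps_X^2))"
    by (rule FG_y_G2_rational)
qed

end
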